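(* Let $t$ be a positive integer and let $G_t$ be the labeling of the complete graph $K_{2t}$ in which the edges of a fixed perfect matching ($t$ pairwise disjoint edges) are labeled $-$ and all other edges are labeled $+$. If $\mathcal{C}$ is a clustering (partition of the vertex set) of $G_t$ with more than one cluster, then some vertex of $G_t$ has at least $t-1$ errors in $\mathcal{C}$.
   Context: An error at a vertex $v$ in a clustering is an edge incident to $v$ that is either a $+$ edge whose endpoints lie in different clusters or a $-$ edge whose endpoints lie in the same cluster. *)

theory Defs
  imports Main "HOL-Library.Disjoint_Sets"
begin

definition perfect_matching :: "'a set \<Rightarrow> 'a set set \<Rightarrow> bool" where
  "perfect_matching V M \<longleftrightarrow> partition_on V M \<and> (\<forall>e\<in>M. card e = 2)"

text \<open>Labeling G_t of the complete graph on V: edge {u,v} is labeled minus iff it lies in M,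
  otherwise plus.\<close>
definition minus_edge :: "'a set set \<Rightarrow> 'a \<Rightarrow> 'a \<Rightarrow> bool" where
  "minus_edge M u v \<longleftrightarrow> {u, v} \<in> M"

definition same_cluster :: "'a set set \<Rightarrow> 'a \<Rightarrow> 'a \<Rightarrow> bool" where
  "same_cluster C u v \<longleftrightarrow> (\<exists>X\<in>C. u \<in> X \<and> v \<in> X)"

text \<open>Errors at v in clustering C: edges {v,u} of the complete graph on V that are plus edges
  between different clusters or minus edges inside one cluster (identified with the other endpoint u).\<close>
definition errors :: "'a set \<Rightarrow> 'a set set \<Rightarrow> 'a set set \<Rightarrow> 'a \<Rightarrow> 'a set" where
  "errors V M C v = {u \<in> V. u \<noteq> v \<and>
     ((\<not> minus_edge M u v \<and> \<not> same_cluster C u v) \<or> (minus_edge M u v \<and> same_cluster C u v))}"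

end

theory Submission
  imports Defs
begin

text \<open>Some cluster Z has at most t elements, since two distinct clusters share the 2t vertices.
  Pick v \<in> Z and let w be its partner in the matching. Every u \<in> V outside Z other than w
  is joined to v by a + edge across clusters, so v has at least 2t - |Z| - 1 \<ge> t - 1 errors.\<close>

lemma partition_on_block_unique:
  assumes "partition_on A P" "X \<in> P" "Y \<in> P" "x \<in> X" "x \<in> Y"
  shows "X = Y"
  using assms partition_onD2 unfolding disjoint_def by blast

lemma partition_on_small_block:
  assumes "partition_on A P" "finite A" "card P > 1"
  obtains Z where "Z \<in> P" "2 * card Z \<le> card A"
proof -
  obtain X Y where XY: "X \<in> P" "Y \<in> P" "X \<noteq> Y"
    using assms(3) card_le_Suc0_iff_eq[of P] card.infinite[of P] by fastforce
  have sub: "X \<subseteq> A" "Y \<subseteq> A"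
    using assms(1) XY partition_onD1 by blast+
  have "X \<inter> Y = {}"
    using assms(1) XY partition_onD2 unfolding disjoint_def by blast
  then have "card X + card Y = card (X \<union> Y)"
    using sub assms(2) by (simp add: card_Un_disjoint finite_subset)
  also have "\<dots> \<le> card A"
    using sub assms(2) by (simp add: card_mono)
  finally have "2 * card X \<le> card A \<or> 2 * card Y \<le> card A" by linarith
  then show thesis using XY that by blast
qed

lemma same_cluster_iff_mem_block:
  assumes "partition_on V C" "Z \<in> C" "v \<in> Z"
  shows "same_cluster C u v \<longleftrightarrow> u \<in> Z"
  using assms partition_on_block_unique unfolding same_cluster_def by metis

lemma minus_edge_iff_mem_matching_edge:
  assumes "perfect_matching V M" "e \<in> M" "v \<in> e" "u \<noteq> v"
  shows "minus_edge M u v \<longleftrightarrow> u \<in> e"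
proof
  have partition: "partition_on V M" and card_e: "card e = 2"
    using assms(1,2) unfolding perfect_matching_def by auto
  show "u \<in> e" if "minus_edge M u v"
  proof -
    have "{u, v} \<in> M" using that unfolding minus_edge_def .
    then have "{u, v} = e"
      using partition_on_block_unique[OF partition _ assms(2), of _ v] assms(3) by blast
    then show "u \<in> e" by blast
  qed
  show "minus_edge M u v" if "u \<in> e"
  proof -
    from card_e obtain a b where "e = {a, b}" "a \<noteq> b"
      by (auto simp: card_2_iff)
    then have "e = {u, v}" using that assms(3,4) by blast
    then show ?thesis using assms(2) unfolding minus_edge_def by simp
  qed
qed

lemma errors_outside_cluster:
  assumes "perfect_matching V M" "partition_on V C"
    and "Z \<in> C" "v \<in> Z" "e \<in> M" "v \<in> e"
  shows "(V - Z) - e \<subseteq> errors V M C v"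
proof
  fix u assume u: "u \<in> (V - Z) - e"
  then have "u \<noteq> v" using assms(4) by blast
  then show "u \<in> errors V M C v"
    using u same_cluster_iff_mem_block[OF assms(2-4)]
      minus_edge_iff_mem_matching_edge[OF assms(1,5,6)]
    unfolding errors_def by blast
qed

theorem lemma1:
  fixes V :: "'a set" and M :: "'a set set" and C :: "'a set set" and t :: nat
  assumes "t > 0"
    and "finite V" and "card V = 2 * t"
    and "perfect_matching V M"
    and "partition_on V C" and "card C > 1"
  shows "\<exists>v\<in>V. card (errors V M C v) \<ge> t - 1"
proof -
  obtain Z where Z: "Z \<in> C" "2 * card Z \<le> card V"
    by (rule partition_on_small_block[OF assms(5,2,6)])
  have ZV: "Z \<subseteq> V" and "Z \<noteq> {}"
    using Z(1) assms(5) partition_onD1 partition_onD3 by blast+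
  then obtain v where v: "v \<in> Z" "v \<in> V" by blast
  obtain e where e: "e \<in> M" "v \<in> e"
    using assms(4) v(2) partition_onD1 unfolding perfect_matching_def by blast
  have "card (e - {v}) = 1"
    using assms(4) e unfolding perfect_matching_def by simp
  then obtain w where w: "e - {v} = {w}" by (rule card_1_singletonE)
  have "(V - Z) - e = (V - Z) - {w}"
    using v(1) w by blast
  have "t - 1 \<le> card (V - Z) - card {w}"
    using ZV Z(2) assms(2,3) by (simp add: card_Diff_subset finite_subset)
  also have "\<dots> \<le> card ((V - Z) - e)"
    unfolding \<open>(V - Z) - e = (V - Z) - {w}\<close> by (rule diff_card_le_card_Diff) simp
  also have "\<dots> \<le> card (errors V M C v)"
    using errors_outside_cluster[OF assms(4,5) Z(1) v(1) e] assms(2)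
    by (intro card_mono) (simp_all add: errors_def)
  finally show ?thesis using v(2) by blast
qed

end
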